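(* Let $\kappa$ be an infinite cardinal. The map $f\colon S\to S$ defined by $f(A,B,C)=(\kappa\setminus A,\ \kappa\setminus(B\cup C),\ \kappa\setminus(A\cup B\cup C))$ for all $(A,B,C)\in S$ is a well-defined Banaschewski function on $S$.
   Context: $\mathcal{F}(\kappa)$ is the Boolean lattice of subsets $X\subseteq\kappa$ that are finite or cofinite. Let $\mu(A,B,C)=(A\cap B)\cup(A\cap C)\cup(B\cap C)$; a triple is balanced if $A\cap B=A\cap C=B\cap C$. $S$ is the set of balanced triples $(A,B,C)\in\mathcal{F}(\kappa)^3$ with $C\setminus\mu(A,B,C)$ finite, ordered componentwise; it is a bounded lattice with componentwise meet, join $(A,B,C)\vee(A',B',C')=(U_1\cup m,U_2\cup m,U_3\cup m)$ where $U_1=A\cup A'$, $U_2=B\cup B'$, $U_3=C\cup C'$, $m=\mu(U_1,U_2,U_3)$, and bounds $(\emptyset,\emptyset,\emptyset)$, $(\kappa,\kappa,\kappa)$. A Banaschewski function on a bounded lattice $L$ is a map $f\colon L\to L$ such that $x\le y$ implies $f(x)\ge f(y)$, and $x\wedge f(x)=0_L$, $x\vee f(x)=1_L$ for all $x\in L$. *)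

theory Defs
  imports Main
begin

text \<open>The infinite cardinal kappa is modelled as the universe of an infinite type 'a.\<close>

definition finco :: "'a set \<Rightarrow> bool" where
  "finco X \<longleftrightarrow> finite X \<or> finite (- X)"

definition mu :: "'a set \<Rightarrow> 'a set \<Rightarrow> 'a set \<Rightarrow> 'a set" where
  "mu A B C = (A \<inter> B) \<union> (A \<inter> C) \<union> (B \<inter> C)"

definition balanced :: "'a set \<Rightarrow> 'a set \<Rightarrow> 'a set \<Rightarrow> bool" where
  "balanced A B C \<longleftrightarrow> A \<inter> B = A \<inter> C \<and> A \<inter> C = B \<inter> C"

definition S :: "('a set \<times> 'a set \<times> 'a set) set" where
  "S = {(A, B, C). finco A \<and> finco B \<and> finco C \<and> balanced A B C
                   \<and> finite (C - mu A B C)}"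

definition S_le :: "'a set \<times> 'a set \<times> 'a set \<Rightarrow> 'a set \<times> 'a set \<times> 'a set \<Rightarrow> bool" where
  "S_le x y \<longleftrightarrow> (case x of (A, B, C) \<Rightarrow> case y of (A', B', C') \<Rightarrow>
                    A \<subseteq> A' \<and> B \<subseteq> B' \<and> C \<subseteq> C')"

definition S_meet :: "'a set \<times> 'a set \<times> 'a set \<Rightarrow> 'a set \<times> 'a set \<times> 'a set \<Rightarrow> 'a set \<times> 'a set \<times> 'a set" where
  "S_meet x y = (case x of (A, B, C) \<Rightarrow> case y of (A', B', C') \<Rightarrow>
                    (A \<inter> A', B \<inter> B', C \<inter> C'))"

definition S_join :: "'a set \<times> 'a set \<times> 'a set \<Rightarrow> 'a set \<times> 'a set \<times> 'a set \<Rightarrow> 'a set \<times> 'a set \<times> 'a set" where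
  "S_join x y = (case x of (A, B, C) \<Rightarrow> case y of (A', B', C') \<Rightarrow>
                    (let U1 = A \<union> A'; U2 = B \<union> B'; U3 = C \<union> C'; m = mu U1 U2 U3
                     in (U1 \<union> m, U2 \<union> m, U3 \<union> m)))"

definition S_bot :: "'a set \<times> 'a set \<times> 'a set" where
  "S_bot = ({}, {}, {})"

definition S_top :: "'a set \<times> 'a set \<times> 'a set" where
  "S_top = (UNIV, UNIV, UNIV)"

text \<open>Banaschewski function on a bounded lattice given by carrier, order, meet, join, bottom, top.
  The clause that f maps the carrier into itself expresses well-definedness.\<close>
definition banaschewski ::
  "'x set \<Rightarrow> ('x \<Rightarrow> 'x \<Rightarrow> bool) \<Rightarrow> ('x \<Rightarrow> 'x \<Rightarrow> 'x) \<Rightarrow> ('x \<Rightarrow> 'x \<Rightarrow> 'x) \<Rightarrow> 'x \<Rightarrow> 'x \<Rightarrow> ('x \<Rightarrow> 'x) \<Rightarrow> bool" where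
  "banaschewski L le mt jn bt tp f \<longleftrightarrow>
     (\<forall>x\<in>L. f x \<in> L) \<and>
     (\<forall>x\<in>L. \<forall>y\<in>L. le x y \<longrightarrow> le (f y) (f x)) \<and>
     (\<forall>x\<in>L. mt x (f x) = bt \<and> jn x (f x) = tp)"

definition fS :: "'a set \<times> 'a set \<times> 'a set \<Rightarrow> 'a set \<times> 'a set \<times> 'a set" where
  "fS x = (case x of (A, B, C) \<Rightarrow> (- A, - (B \<union> C), - (A \<union> B \<union> C)))"

end

theory Submission
  imports Defs
begin

text \<open>The third component of \<open>fS (A, B, C)\<close> is the intersection of the first two, so the
  triple is balanced with median equal to its third component; finiteness-or-cofiniteness is
  preserved because the finite-cofinite sets form a Boolean algebra. The lattice identities hold
  componentwise for arbitrary triples.\<close>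

lemma finco_Compl_iff [simp]: "finco (- X) \<longleftrightarrow> finco X"
  unfolding finco_def by auto

lemma finco_Un: "finco X \<Longrightarrow> finco Y \<Longrightarrow> finco (X \<union> Y)"
  unfolding finco_def by (auto dest: finite_subset)

lemma finco_Int: "finco (X \<inter> Y)" if "finco X" "finco Y"
  using finco_Un[of "- X" "- Y"] that by (metis Compl_Un double_compl finco_Compl_iff)

lemma Int_triple_mem_S: "(X, Y, X \<inter> Y) \<in> S" if "finco X" "finco Y"
proof -
  have "balanced X Y (X \<inter> Y)" "mu X Y (X \<inter> Y) = X \<inter> Y"
    unfolding balanced_def mu_def by blast+
  then show ?thesis using that by (simp add: S_def finco_Int)
qed

lemma fS_mem_S:
  assumes "x \<in> S"
  shows "fS x \<in> S"
proof -
  obtain A B C where x: "x = (A, B, C)" and "finco A" "finco B" "finco C"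
    using assms by (auto simp: S_def)
  then have "finco (- A)" "finco (- (B \<union> C))"
    by (simp_all only: finco_Compl_iff finco_Un)
  then have "(- A, - (B \<union> C), - A \<inter> - (B \<union> C)) \<in> S"
    by (rule Int_triple_mem_S)
  moreover have "- (A \<union> B \<union> C) = - A \<inter> - (B \<union> C)" by blast
  ultimately show ?thesis
    unfolding x fS_def by (simp only: prod.case)
qed

lemma fS_antimono: "S_le x y \<Longrightarrow> S_le (fS y) (fS x)"
  by (cases x; cases y) (auto simp: S_le_def fS_def)

lemma S_meet_fS: "S_meet x (fS x) = S_bot"
  by (cases x) (auto simp: S_meet_def fS_def S_bot_def)

lemma S_join_fS: "S_join x (fS x) = S_top"
  by (cases x) (auto simp: S_join_def fS_def S_top_def mu_def Let_def)

theorem lemma4p1: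
  assumes "infinite (UNIV :: 'a set)"
  shows "banaschewski (S :: ('a set \<times> 'a set \<times> 'a set) set) S_le S_meet S_join S_bot S_top fS"
  unfolding banaschewski_def
  by (simp add: fS_mem_S fS_antimono S_meet_fS S_join_fS)

end
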